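(* Let $\gamma\ge0$ be an integer and let $\xi=\{\xi^m\}_{m\ge0}$ be given by $\xi^m=K_\gamma\mathbf{1}(m=\gamma)$ with $K_\gamma=\pm2\omega_\gamma\sqrt{\frac{2}{3C_{\gamma\gamma\gamma\gamma}}}$. Then $\mathcal{M}(\xi)=0$.
   Context: $\omega_n=n+1$, $C_{ijkm}=\frac2\pi\int_{-1}^1U_iU_jU_kU_m\sqrt{1-y^2}\,dy$ ($U_n$ Chebyshev polynomials of the second kind). $(A\xi)^m=\omega_m^2\xi^m$; $(f(u))^m=-\sum_{i,j,k\ge0}C_{ijkm}u^iu^ju^k$; $\Phi^t(\xi)=\{\xi^n\cos(\omega_nt)\}_n$; $\langle f\rangle(\xi)=\frac1{2\pi}\int_0^{2\pi}\Phi^t[f(\Phi^t(\xi))]dt$; and $\mathcal{M}(\xi)=A\xi+\langle f\rangle(\xi)$. *)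

theory Defs
  imports "HOL-Analysis.Analysis"
begin

definition omega :: "nat \<Rightarrow> real" where
  "omega n = real n + 1"

fun chebU :: "nat \<Rightarrow> real \<Rightarrow> real" where
  "chebU 0 y = 1"
| "chebU (Suc 0) y = 2 * y"
| "chebU (Suc (Suc n)) y = 2 * y * chebU (Suc n) y - chebU n y"

definition Ccoef :: "nat \<Rightarrow> nat \<Rightarrow> nat \<Rightarrow> nat \<Rightarrow> real" where
  "Ccoef i j k m = 2 / pi * integral {-1..1}
     (\<lambda>y. chebU i y * chebU j y * chebU k y * chebU m y * sqrt (1 - y\<^sup>2))"

definition Aop :: "(nat \<Rightarrow> real) \<Rightarrow> (nat \<Rightarrow> real)" where
  "Aop xi = (\<lambda>m. (omega m)\<^sup>2 * xi m)"

definition fnl :: "(nat \<Rightarrow> real) \<Rightarrow> (nat \<Rightarrow> real)" where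
  "fnl u = (\<lambda>m. - (\<Sum>\<^sub>\<infinity>(i, j, k)\<in>UNIV. Ccoef i j k m * u i * u j * u k))"

definition Phi :: "real \<Rightarrow> (nat \<Rightarrow> real) \<Rightarrow> (nat \<Rightarrow> real)" where
  "Phi t xi = (\<lambda>n. xi n * cos (omega n * t))"

definition favg :: "(nat \<Rightarrow> real) \<Rightarrow> (nat \<Rightarrow> real)" where
  "favg xi = (\<lambda>m. 1 / (2 * pi) * integral {0..2 * pi} (\<lambda>t. Phi t (fnl (Phi t xi)) m))"

definition Mop :: "(nat \<Rightarrow> real) \<Rightarrow> (nat \<Rightarrow> real)" where
  "Mop xi = (\<lambda>m. Aop xi m + favg xi m)"

end

theory Submission
  imports Defs "HOL-Computational_Algebra.Polynomial"
begin

(* Under the linear flow the single mode stays a single mode, K cos(w t) e_g with w = omega g,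
   so the m-th component of the averaged nonlinearity is -C_{gggm} K^3 times the time average
   of cos^3(w t) cos(omega m t). Expanding cos^3 into first and third harmonics, only the
   resonances omega m = w (weight 3/8) and omega m = 3 w, i.e. m = 3 g + 2 (weight 1/8), survive.
   The second one is killed by C_{ggg(3g+2)} = 0: U_g^3 has degree 3 g, and U_m is orthogonal
   to all polynomials of lower degree for the weight sqrt(1 - y^2), as the substitution
   y = -cos t turns U_m(y) sqrt(1 - y^2) dy into +-sin((m+1) t) sin t dt.
   At m = g what remains is w^2 K - 3/8 C_{gggg} K^3, which vanishes by the choice of K. *)

lemma chebU_cos_mult_sin: "chebU n (cos t) * sin t = sin ((real n + 1) * t)"
proof (induction n rule: induct_nat_012)
  case 0
  then show ?case by simp
next
  case 1
  then show ?case by (simp add: sin_double)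
next
  case (ge2 n)
  have "chebU (Suc (Suc n)) (cos t) * sin t
      = 2 * cos t * (chebU (Suc n) (cos t) * sin t) - chebU n (cos t) * sin t"
    by (simp add: algebra_simps)
  also have "\<dots> = 2 * cos t * sin ((real n + 2) * t) - sin ((real n + 2) * t - t)"
    using ge2 by (simp add: algebra_simps)
  also have "\<dots> = sin ((real n + 2) * t + t)"
    using sin_add[of "(real n + 2) * t" t] sin_diff[of "(real n + 2) * t" t] by simp
  finally show ?case
    by (simp add: algebra_simps)
qed

lemma chebU_minus: "chebU n (- y) = (-1) ^ n * chebU n y"
  by (induction n y rule: chebU.induct) (auto simp: algebra_simps)

lemma continuous_on_chebU [continuous_intros]: "continuous_on S (chebU n)"
  by (induction n rule: induct_nat_012) (auto intro!: continuous_intros)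

lemma chebU_eq_poly:
  obtains p where "degree p \<le> n" "chebU n = poly p"
proof -
  have "\<exists>p. degree p \<le> n \<and> chebU n = poly p"
  proof (induction n rule: induct_nat_012)
    case 0
    show ?case by (intro exI[of _ "[:1:]"]) auto
  next
    case 1
    show ?case by (intro exI[of _ "[:0, 2:]"]) auto
  next
    case (ge2 n)
    then obtain p q where p: "degree p \<le> Suc n" "chebU (Suc n) = poly p"
      and q: "degree q \<le> n" "chebU n = poly q"
      by blast
    have "degree ([:0, 2:] * p) \<le> Suc (Suc n)"
      using degree_mult_le[of "[:0, 2:]" p] p(1) by simp
    then have "degree ([:0, 2:] * p - q) \<le> Suc (Suc n)"
      using degree_diff_le q(1) by (meson le_SucI le_trans)
    then show ?case
      using p(2) q(2) by (intro exI[of _ "[:0, 2:] * p - q"]) auto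
  qed
  then show ?thesis
    using that by blast
qed

lemma has_integral_cos_int_mult:
  assumes "c \<in> \<int>"
  shows "((\<lambda>t. cos (c * t)) has_integral (if c = 0 then real k * pi else 0)) {0..real k * pi}"
proof (cases "c = 0")
  case True
  then show ?thesis
    using has_integral_const_real[of "1::real" 0 "k * pi"] by simp
next
  case False
  have "((\<lambda>t. cos (c * t)) has_integral (sin (c * (k * pi)) / c - sin (c * 0) / c)) {0..k * pi}"
  proof (rule fundamental_theorem_of_calculus)
    show "((\<lambda>t. sin (c * t) / c) has_vector_derivative cos (c * t)) (at t within {0..k * pi})" for t
      unfolding has_real_derivative_iff_has_vector_derivative[symmetric]
      using False by (auto intro!: derivative_eq_intros)
  qed simp
  moreover have "sin ((c * k) * pi) = 0"
    using assms by (simp add: sin_times_pi_eq_0)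
  ultimately show ?thesis
    using False by (simp add: mult.assoc)
qed

lemma has_integral_sin_Suc_mult_sin:
  assumes "m \<noteq> 0"
  shows "((\<lambda>t. sin ((real m + 1) * t) * sin t) has_integral 0) {0..pi}"
proof -
  have "((\<lambda>t. (cos (real m * t) - cos ((real m + 2) * t)) / 2) has_integral (0 - 0) / 2) {0..pi}"
    using has_integral_cos_int_mult[of "real m" 1] has_integral_cos_int_mult[of "real m + 2" 1] assms
    by (intro has_integral_divide has_integral_diff) auto
  moreover have "(cos (real m * t) - cos ((real m + 2) * t)) / 2 = sin ((real m + 1) * t) * sin t"
    for t
    using cos_diff[of "(real m + 1) * t" t] cos_add[of "(real m + 1) * t" t]
    by (simp add: algebra_simps)
  ultimately show ?thesis
    by simp
qed

lemma integral_chebU_weight: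
  assumes "m \<noteq> 0"
  shows "integral {-1..1} (\<lambda>y. chebU m y * sqrt (1 - y\<^sup>2)) = 0"
proof -
  let ?f = "\<lambda>y. chebU m y * sqrt (1 - y\<^sup>2)"
  have "((\<lambda>t. sin t *\<^sub>R ?f (- cos t)) has_integral integral {- cos 0..- cos pi} ?f) {0..pi}"
    by (rule has_integral_substitution[where c = "-1" and d = 1])
      (auto intro!: continuous_intros derivative_eq_intros)
  then have substituted: "((\<lambda>t. sin t * ?f (- cos t)) has_integral integral {-1..1} ?f) {0..pi}"
    by simp
  have "sin t * ?f (- cos t) = (-1) ^ m * (sin ((real m + 1) * t) * sin t)" if "t \<in> {0..pi}" for t
  proof -
    have "sqrt (1 - (cos t)\<^sup>2) = sin t"
      using that by (simp add: sin_squared_eq[symmetric] sin_ge_zero)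
    then have "sin t * ?f (- cos t) = (-1) ^ m * (chebU m (cos t) * sin t) * sin t"
      by (simp add: chebU_minus)
    then show ?thesis
      by (simp only: chebU_cos_mult_sin mult.assoc)
  qed
  then have "((\<lambda>t. sin t * ?f (- cos t)) has_integral (-1) ^ m * 0) {0..pi}"
    by (intro has_integral_spike_finite[where S = "{}",
          OF _ _ has_integral_mult_right[OF has_integral_sin_Suc_mult_sin[OF assms]]]) auto
  then show ?thesis
    using has_integral_unique[OF substituted] by simp
qed

lemma integrable_power_chebU_weight:
  "(\<lambda>y. y ^ k * chebU m y * sqrt (1 - y\<^sup>2)) integrable_on {-1..1}"
  by (intro integrable_continuous_interval continuous_intros)

lemma integral_power_chebU_weight:
  "k < m \<Longrightarrow> integral {-1..1} (\<lambda>y. y ^ k * chebU m y * sqrt (1 - y\<^sup>2)) = 0"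
proof (induction k arbitrary: m)
  case 0
  then show ?case
    using integral_chebU_weight[of m] by simp
next
  case (Suc k)
  then obtain n where m: "m = Suc n" and "k < n"
    by (cases m) auto
  let ?g = "\<lambda>j y. y ^ k * chebU j y * sqrt (1 - y\<^sup>2)"
  have "(?g j has_integral 0) {-1..1}" if "j \<in> {n, Suc (Suc n)}" for j
    using that \<open>k < n\<close> Suc.IH[of j] integrable_power_chebU_weight[of k j]
    by (metis has_integral_integral insert_iff less_SucI singletonD)
  then have "((\<lambda>y. (?g (Suc (Suc n)) y + ?g n y) / 2) has_integral (0 + 0) / 2) {-1..1}"
    by (intro has_integral_divide has_integral_add) (simp_all del: chebU.simps)
  moreover have "(?g (Suc (Suc n)) y + ?g n y) / 2 = y ^ Suc k * chebU m y * sqrt (1 - y\<^sup>2)" for y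
    by (simp add: m algebra_simps)
  ultimately show ?case
    by (simp add: integral_unique)
qed

lemma integral_poly_chebU_weight:
  assumes "degree p < m"
  shows "integral {-1..1} (\<lambda>y. poly p y * chebU m y * sqrt (1 - y\<^sup>2)) = 0"
proof -
  have "((\<lambda>y. \<Sum>i\<le>degree p. coeff p i * (y ^ i * chebU m y * sqrt (1 - y\<^sup>2)))
      has_integral (\<Sum>i\<le>degree p. coeff p i * 0)) {-1..1}"
  proof (intro has_integral_sum has_integral_mult_right)
    fix i
    assume "i \<in> {..degree p}"
    then show "((\<lambda>y. y ^ i * chebU m y * sqrt (1 - y\<^sup>2)) has_integral 0) {-1..1}"
      using assms integral_power_chebU_weight[of i m] integrable_power_chebU_weight[of i m]
      by (metis atMost_iff has_integral_integral le_less_trans)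
  qed simp
  then show ?thesis
    by (simp add: poly_altdef sum_distrib_right mult.assoc integral_unique)
qed

lemma Ccoef_cube_resonant: "Ccoef g g g (3 * g + 2) = 0"
proof -
  obtain p where p: "degree p \<le> g" "chebU g = poly p"
    by (rule chebU_eq_poly)
  have "degree (p * p * p) \<le> 3 * g"
    using degree_mult_le[of "p * p" p] degree_mult_le[of p p] p(1) by linarith
  then have "integral {-1..1} (\<lambda>y. poly (p * p * p) y * chebU (3 * g + 2) y * sqrt (1 - y\<^sup>2)) = 0"
    by (intro integral_poly_chebU_weight) linarith
  then show ?thesis
    unfolding Ccoef_def p(2) by simp
qed

lemma Ccoef_nonneg: "0 \<le> Ccoef g g g g"
proof -
  have "0 \<le> integral {-1..1} (\<lambda>y. (chebU g y)\<^sup>2 * (chebU g y)\<^sup>2 * sqrt (1 - y\<^sup>2))"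
    by (intro integral_nonneg integrable_continuous_interval continuous_intros)
      (auto simp: abs_square_le_1 abs_le_iff)
  then show ?thesis
    unfolding Ccoef_def by (simp add: power2_eq_square mult.assoc)
qed

lemma cos_cube_mult_cos:
  fixes x y :: real
  shows "cos x ^ 3 * cos y
    = 3 / 8 * (cos (x - y) + cos (x + y)) + 1 / 8 * (cos (3 * x - y) + cos (3 * x + y))"
proof -
  have product_to_sum: "cos (z - y) + cos (z + y) = 2 * cos z * cos y" for z
    by (simp add: cos_add cos_diff)
  show ?thesis
    unfolding product_to_sum cos_treble_cos by (simp add: power3_eq_cube algebra_simps)
qed

lemma has_integral_cos_cube_mult_cos:
  assumes "a \<in> \<int>" "b \<in> \<int>" "a > 0" "b > 0"
  shows "((\<lambda>t. cos (a * t) ^ 3 * cos (b * t))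
    has_integral 2 * pi * (3 / 8 * of_bool (b = a) + 1 / 8 * of_bool (b = 3 * a))) {0..2 * pi}"
proof -
  have cos_int: "((\<lambda>t. cos (c * t)) has_integral (if c = 0 then 2 * pi else 0)) {0..2 * pi}"
    if "c \<in> \<int>" for c
    using has_integral_cos_int_mult[OF that, of 2] by (cases "c = 0") simp_all
  have integrand: "(\<lambda>t. cos (a * t) ^ 3 * cos (b * t))
      = (\<lambda>t. 3 / 8 * (cos ((a - b) * t) + cos ((a + b) * t))
          + 1 / 8 * (cos ((3 * a - b) * t) + cos ((3 * a + b) * t)))"
    by (simp add: cos_cube_mult_cos left_diff_distrib distrib_right mult.assoc)
  have resonances: "2 * pi * (3 / 8 * of_bool (b = a) + 1 / 8 * of_bool (b = 3 * a))
      = 3 / 8 * ((if a - b = 0 then 2 * pi else 0) + (if a + b = 0 then 2 * pi else 0))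
        + 1 / 8 * ((if 3 * a - b = 0 then 2 * pi else 0) + (if 3 * a + b = 0 then 2 * pi else 0))"
    using assms by auto
  show ?thesis
    unfolding integrand resonances
    using assms by (intro has_integral_add has_integral_mult_right cos_int) auto
qed

lemma fnl_single_mode: "fnl (\<lambda>n. if n = g then c else 0) m = - (Ccoef g g g m * c ^ 3)"
proof -
  have "(\<Sum>\<^sub>\<infinity>(i, j, k)\<in>UNIV.
          Ccoef i j k m * (if i = g then c else 0) * (if j = g then c else 0) * (if k = g then c else 0))
      = (\<Sum>\<^sub>\<infinity>_\<in>{(g, g, g)}. Ccoef g g g m * c ^ 3)"
    by (rule infsum_cong_neutral) (auto simp: power3_eq_cube mult.assoc split: if_splits)
  then show ?thesis
    unfolding fnl_def by simp
qed

lemma favg_single_mode: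
  "favg (\<lambda>n. if n = g then c else 0) m
    = - (Ccoef g g g m * c ^ 3) * (3 / 8 * of_bool (m = g) + 1 / 8 * of_bool (m = 3 * g + 2))"
proof -
  have "Phi t (\<lambda>n. if n = g then c else 0) = (\<lambda>n. if n = g then c * cos (omega g * t) else 0)" for t
    unfolding Phi_def by auto
  then have integrand: "Phi t (fnl (Phi t (\<lambda>n. if n = g then c else 0))) m
      = - (Ccoef g g g m * c ^ 3) * (cos (omega g * t) ^ 3 * cos (omega m * t))" for t
    by (simp add: Phi_def fnl_single_mode power_mult_distrib)
  have "omega m = omega g \<longleftrightarrow> m = g" "omega m = 3 * omega g \<longleftrightarrow> m = 3 * g + 2"
    by (auto simp: omega_def)
  then have "((\<lambda>t. cos (omega g * t) ^ 3 * cos (omega m * t))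
      has_integral 2 * pi * (3 / 8 * of_bool (m = g) + 1 / 8 * of_bool (m = 3 * g + 2))) {0..2 * pi}"
    using has_integral_cos_cube_mult_cos[of "omega g" "omega m"] by (simp add: omega_def)
  then show ?thesis
    unfolding favg_def integrand by (simp add: integral_unique)
qed

lemma amplitude_balances_cubic:
  fixes w C K :: real
  assumes "0 \<le> C" "K = 2 * w * sqrt (2 / (3 * C)) \<or> K = - (2 * w * sqrt (2 / (3 * C)))"
  shows "w\<^sup>2 * K = 3 / 8 * C * K ^ 3"
proof (cases "C = 0")
  \<comment> \<open>never the case for C = Ccoef g g g g, but then 2 / 0 = 0 forces K = 0\<close>
  case True
  then show ?thesis
    using assms(2) by auto
next
  case False
  have "K\<^sup>2 = 8 * w\<^sup>2 / (3 * C)"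
    using assms by (auto simp: power_mult_distrib)
  then show ?thesis
    using False by (simp add: power3_eq_cube power2_eq_square field_simps)
qed

theorem lemma6p1:
  fixes \<gamma> :: nat and K :: real
  assumes "K = 2 * omega \<gamma> * sqrt (2 / (3 * Ccoef \<gamma> \<gamma> \<gamma> \<gamma>))
         \<or> K = - (2 * omega \<gamma> * sqrt (2 / (3 * Ccoef \<gamma> \<gamma> \<gamma> \<gamma>)))"
  shows "Mop (\<lambda>m. if m = \<gamma> then K else 0) = (\<lambda>m. 0)"
proof
  fix m
  have "(omega \<gamma>)\<^sup>2 * K = 3 / 8 * Ccoef \<gamma> \<gamma> \<gamma> \<gamma> * K ^ 3"
    using amplitude_balances_cubic[OF Ccoef_nonneg assms] .
  then show "Mop (\<lambda>m. if m = \<gamma> then K else 0) m = 0"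
    using Ccoef_cube_resonant[of \<gamma>]
    by (auto simp: Mop_def Aop_def favg_single_mode)
qed

end
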